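(* Let $f(x)=x^5+px^4+qx^3+rx^2+sx+t$ with real coefficients and let $D$, $L_1$ be as in the context. Suppose $D=0$ and $L_1\neq 0$. Then $f$ has exactly one double root and three simple roots. Moreover, if $L_1>0$ then the double root and all three simple roots are real (4 distinct real roots), and if $L_1<0$ then $f$ has one real double root, one real simple root and a pair of non-real complex conjugate simple roots.
   Context: Let $\alpha_1,\dots,\alpha_5\in\mathbb{C}$ be the roots of $f$ listed with multiplicity. $D=\prod_{1\le i<j\le 5}(\alpha_i-\alpha_j)^2$ is the discriminant of $f$. $L_1=-264ps^2r-12p^3tq^2+36r^3pq-124srpq^2+28srp^3q+260sptq-132p^2qrt+240pr^2t+234sqr^2+32p^4tr+48ptq^3-56sp^3t-80q^2rt+194qs^2p^2-600str-6q^3sp^2+2p^2q^2r^2-12sr^2p^2-54r^4+320s^3-8q^3r^2-8r^3p^3+250qt^2-176q^2s^2+24q^4s-36p^4s^2-100p^2t^2$. *)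

theory Defs
  imports "HOL-Computational_Algebra.Computational_Algebra"
begin

definition quintic :: "real \<Rightarrow> real \<Rightarrow> real \<Rightarrow> real \<Rightarrow> real \<Rightarrow> real poly" where
  "quintic p q r s t = [:t, s, r, q, p, 1:]"

text \<open>Discriminant computed from a list of roots listed with multiplicity:
  product over i < j of (alpha_i - alpha_j)^2.\<close>
definition root_disc :: "complex list \<Rightarrow> complex" where
  "root_disc xs = (\<Prod>j<length xs. \<Prod>i<j. (xs ! i - xs ! j)^2)"

definition L1 :: "real \<Rightarrow> real \<Rightarrow> real \<Rightarrow> real \<Rightarrow> real \<Rightarrow> real" where
  "L1 p q r s t = -264*p*s^2*r - 12*p^3*t*q^2 + 36*r^3*p*q - 124*s*r*p*q^2 + 28*s*r*p^3*q
    + 260*s*p*t*q - 132*p^2*q*r*t + 240*p*r^2*t + 234*s*q*r^2 + 32*p^4*t*r + 48*p*t*q^3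
    - 56*s*p^3*t - 80*q^2*r*t + 194*q*s^2*p^2 - 600*s*t*r - 6*q^3*s*p^2 + 2*p^2*q^2*r^2
    - 12*s*r^2*p^2 - 54*r^4 + 320*s^3 - 8*q^3*r^2 - 8*r^3*p^3 + 250*q*t^2 - 176*q^2*s^2
    + 24*q^4*s - 36*p^4*s^2 - 100*p^2*t^2"

end

theory Submission
  imports Defs
begin

text \<open>
  A vanishing discriminant forces a repeated root, so the root multiset has the shape
  z, z, a, b, c. Expanding (x - z)^2 (x - a)(x - b)(x - c) and substituting its coefficients
  into L1 gives L1 = 2 V^2, where V is the product of the pairwise differences of z, a, b, c;
  hence L1 \<noteq> 0 makes z, a, b, c distinct. Complex conjugation permutes the roots of the real
  quintic, must fix the only double root z, and so either fixes a, b, c or swaps two of them.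
  Accordingly cnj V = V or cnj V = -V, i.e. V is real or purely imaginary, and L1 = 2 V^2 is
  positive or negative respectively.
\<close>

lemma root_disc_eq_0_iff: "root_disc xs = 0 \<longleftrightarrow> \<not> distinct xs"
proof -
  have "root_disc xs = 0 \<longleftrightarrow> (\<exists>j<length xs. \<exists>i<j. xs ! i = xs ! j)"
    by (auto simp: root_disc_def)
  also have "\<dots> \<longleftrightarrow> \<not> distinct xs"
    by (auto simp: distinct_conv_nth dest: less_trans) (metis linorder_neqE_nat)
  finally show ?thesis .
qed

lemma mset_eq_double_if_not_distinct:
  assumes "length xs = 5" "\<not> distinct xs"
  obtains z a b c where "mset xs = {#z, z, a, b, c#}"
proof -
  obtain us y vs ws where xs: "xs = us @ [y] @ vs @ [y] @ ws"
    using not_distinct_decomp[OF assms(2)] by blast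
  define rest where "rest = us @ vs @ ws"
  have "length rest = 3"
    using assms(1) unfolding xs rest_def by simp
  then obtain a b c where "rest = [a, b, c]"
    by (auto simp: numeral_3_eq_3 length_Suc_conv)
  moreover have "mset xs = {#y, y#} + mset rest"
    unfolding xs rest_def by simp
  ultimately have "mset xs = {#y, y, a, b, c#}"
    by (simp add: add_mset_commute)
  then show thesis by (rule that)
qed

lemma cnj_prod_mset: "cnj (prod_mset M) = prod_mset (image_mset cnj M)"
  by (induction M) simp_all

lemma proots_prod_linear_factors:
  "proots (\<Prod>x\<in>#A. [:-x, 1:]) = (A :: 'a :: idom multiset)"
proof (induction A)
  case (add x A)
  have "(\<Prod>x\<in>#A. [:-x, 1:]) \<noteq> 0"
    by auto
  then show ?case
    using add.IH proots_linear_factor[of "-x"] by (simp add: proots_mult del: mult_pCons_left)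
qed simp

lemma proots_real_poly_cnj:
  assumes "\<And>i. coeff P i \<in> \<real>"
  shows "image_mset cnj (proots P) = proots P"
proof (cases "P = 0")
  case False
  define c R where "c = lead_coeff P" "R = proots P"
  have P: "P = smult c (\<Prod>x\<in>#R. [:-x, 1:])"
    unfolding c_R_def by (rule complex_poly_decompose_multiset[symmetric])
  have c_real: "cnj c = c"
    unfolding c_R_def using assms Reals_cnj_iff by blast
  have "poly P x = poly (smult c (\<Prod>x\<in>#image_mset cnj R. [:-x, 1:])) x" for x
  proof -
    have "poly P x = cnj (poly P (cnj x))"
      using poly_cnj_real[OF assms, of "cnj x"] by simp
    also have "poly P (cnj x) = c * (\<Prod>y\<in>#R. cnj x - y)"
      by (subst P) (simp add: poly_prod_mset multiset.map_comp o_def)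
    also have "cnj (c * (\<Prod>y\<in>#R. cnj x - y)) = poly (smult c (\<Prod>x\<in>#image_mset cnj R. [:-x, 1:])) x"
      by (simp add: c_real poly_prod_mset cnj_prod_mset multiset.map_comp o_def)
    finally show ?thesis .
  qed
  then have "P = smult c (\<Prod>x\<in>#image_mset cnj R. [:-x, 1:])"
    by (intro poly_ext)
  moreover have "c \<noteq> 0"
    using False unfolding c_R_def by simp
  ultimately have "proots P = image_mset cnj R"
    by (simp add: proots_prod_linear_factors)
  then show ?thesis unfolding c_R_def by simp
qed simp

lemma cnj_fixes_double_root:
  fixes z a b c :: complex
  assumes "distinct [z, a, b, c]" "image_mset cnj {#z, z, a, b, c#} = {#z, z, a, b, c#}"
  shows "cnj z = z" and "cnj ` {a, b, c} = {a, b, c}"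
proof -
  have "count (image_mset cnj {#z, z, a, b, c#}) (cnj z) \<ge> 2"
    by simp
  then have "count {#z, z, a, b, c#} (cnj z) \<ge> 2"
    unfolding assms(2) .
  then show z: "cnj z = z"
    using assms(1) by (auto split: if_splits)
  have "image_mset cnj {#a, b, c#} = {#a, b, c#}"
    using assms(2) by (simp add: z)
  then show "cnj ` {a, b, c} = {a, b, c}"
    by (metis set_image_mset set_mset_add_mset_insert set_mset_empty)
qed

lemma cnj_closed_three_cases:
  fixes a b c :: complex
  assumes "distinct [a, b, c]" "cnj ` {a, b, c} = {a, b, c}"
  obtains "Im a = 0" "Im b = 0" "Im c = 0"
  | x y where "{#a, b, c#} = {#x, y, cnj y#}" "Im x = 0" "Im y \<noteq> 0"
proof -
  have real_iff: "Im x = 0 \<longleftrightarrow> cnj x = x" for x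
    by (simp add: complex_eq_iff)
  have "cnj a \<in> {a, b, c}" "cnj b \<in> {a, b, c}" "cnj c \<in> {a, b, c}"
    using assms(2) by blast+
  then consider "cnj a = a" "cnj b = b" "cnj c = c" | "cnj a = a" "cnj b = c"
    | "cnj a = b" "cnj c = c" | "cnj a = c" "cnj b = b"
    using assms(1) by auto
  then show thesis
  proof cases
    case 1
    then show thesis using that(1) real_iff by blast
  next
    case 2
    then show thesis using that(2)[of a b] assms(1) real_iff by auto
  next
    case 3
    then show thesis using that(2)[of c a] assms(1) real_iff by (auto simp: add_mset_commute)
  next
    case 4
    then show thesis using that(2)[of b a] assms(1) real_iff by (auto simp: add_mset_commute)
  qed
qed

definition vandermonde4 :: "'a::comm_ring_1 \<Rightarrow> 'a \<Rightarrow> 'a \<Rightarrow> 'a \<Rightarrow> 'a" where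
  "vandermonde4 z a b c = (z - a) * (z - b) * (z - c) * (a - b) * (a - c) * (b - c)"

lemma vandermonde4_eq_0_iff:
  "vandermonde4 z a b c = (0 :: 'a :: idom) \<longleftrightarrow> \<not> distinct [z, a, b, c]"
  by (auto simp: vandermonde4_def)

lemma cnj_vandermonde4: "cnj (vandermonde4 z a b c) = vandermonde4 (cnj z) (cnj a) (cnj b) (cnj c)"
  by (simp add: vandermonde4_def)

lemma vandermonde4_swap: "vandermonde4 z a c b = - vandermonde4 z a b c"
  by (simp add: vandermonde4_def algebra_simps)

lemma sign_of_twice_square:
  assumes L: "complex_of_real L = 2 * w ^ 2" and "w \<noteq> 0"
  shows "cnj w = w \<Longrightarrow> L > 0" and "cnj w = - w \<Longrightarrow> L < 0"
proof -
  assume "cnj w = w"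
  then obtain x where "w = of_real x" "x \<noteq> 0"
    using \<open>w \<noteq> 0\<close> by (intro that[of "Re w"]) (auto simp: complex_eq_iff)
  then have "complex_of_real L = of_real (2 * x ^ 2)" and "x \<noteq> 0"
    using L by simp_all
  then show "L > 0" by (simp only: of_real_eq_iff) simp
next
  assume "cnj w = - w"
  then obtain y where "w = \<i> * of_real y" "y \<noteq> 0"
    using \<open>w \<noteq> 0\<close> by (intro that[of "Im w"]) (auto simp: complex_eq_iff)
  then have "complex_of_real L = of_real (- 2 * y ^ 2)" and "y \<noteq> 0"
    using L by (simp_all add: power_mult_distrib)
  then show "L < 0" by (simp only: of_real_eq_iff) simp
qed

lemma L1_of_double_root:
  assumes "proots (map_poly complex_of_real (quintic p q r s t)) = {#z, z, a, b, c#}"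
  shows "complex_of_real (L1 p q r s t) = 2 * vandermonde4 z a b c ^ 2"
proof -
  let ?F = "map_poly complex_of_real (quintic p q r s t)"
  have F: "?F = [:of_real t, of_real s, of_real r, of_real q, of_real p, 1:]"
    by (simp add: quintic_def map_poly_pCons)
  have "?F = (\<Prod>x\<in>#{#z, z, a, b, c#}. [:-x, 1:])"
    using complex_poly_decompose_multiset[of ?F] assms by (simp add: F)
  also have "\<dots> = [:-(z*z*a*b*c), z*z*(a*b+a*c+b*c) + 2*z*a*b*c,
      -(z*z*(a+b+c) + 2*z*(a*b+a*c+b*c) + a*b*c), z*z + 2*z*(a+b+c) + a*b+a*c+b*c,
      -(2*z+a+b+c), 1:]"
    by (simp add: algebra_simps)
  finally have coeffs: "of_real t = -(z*z*a*b*c)" "of_real s = z*z*(a*b+a*c+b*c) + 2*z*a*b*c"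
    "of_real r = -(z*z*(a+b+c) + 2*z*(a*b+a*c+b*c) + a*b*c)"
    "of_real q = z*z + 2*z*(a+b+c) + a*b+a*c+b*c" "of_real p = -(2*z+a+b+c)"
    unfolding F by simp_all
  show ?thesis
    unfolding L1_def vandermonde4_def of_real_add of_real_diff of_real_mult of_real_power
      of_real_numeral of_real_minus coeffs
    by algebra
qed

lemma distinct_double_root_if_L1_ne_0:
  assumes "proots (map_poly complex_of_real (quintic p q r s t)) = {#z, z, a, b, c#}"
    and "L1 p q r s t \<noteq> 0"
  shows "distinct [z, a, b, c]"
proof -
  have "vandermonde4 z a b c \<noteq> 0"
    using L1_of_double_root[OF assms(1)] assms(2)
    by (metis mult_zero_right of_real_eq_0_iff zero_power2)
  then show ?thesis
    by (simp add: vandermonde4_eq_0_iff)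
qed

lemma L1_gt_0_if_real_roots:
  assumes roots: "proots (map_poly complex_of_real (quintic p q r s t)) = {#z, z, a, b, c#}"
    and "L1 p q r s t \<noteq> 0" and "cnj z = z" "cnj a = a" "cnj b = b" "cnj c = c"
  shows "L1 p q r s t > 0"
proof (rule sign_of_twice_square(1)[OF L1_of_double_root[OF roots]])
  show "vandermonde4 z a b c \<noteq> 0"
    using distinct_double_root_if_L1_ne_0[OF assms(1,2)] vandermonde4_eq_0_iff by blast
  show "cnj (vandermonde4 z a b c) = vandermonde4 z a b c"
    using assms(3-6) by (simp add: cnj_vandermonde4)
qed

lemma L1_lt_0_if_conjugate_pair:
  assumes roots: "proots (map_poly complex_of_real (quintic p q r s t)) = {#z, z, x, y, cnj y#}"
    and "L1 p q r s t \<noteq> 0" and "cnj z = z" "cnj x = x"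
  shows "L1 p q r s t < 0"
proof (rule sign_of_twice_square(2)[OF L1_of_double_root[OF roots]])
  show "vandermonde4 z x y (cnj y) \<noteq> 0"
    using distinct_double_root_if_L1_ne_0[OF assms(1,2)] vandermonde4_eq_0_iff by blast
  show "cnj (vandermonde4 z x y (cnj y)) = - vandermonde4 z x y (cnj y)"
    using assms(3,4) vandermonde4_swap[of z x y "cnj y"] by (simp add: cnj_vandermonde4)
qed

theorem mainTheorem2:
  fixes p q r s t :: real and \<alpha> :: "complex list"
  assumes roots: "mset \<alpha> = proots (map_poly complex_of_real (quintic p q r s t))"
    and D0: "root_disc \<alpha> = 0"
    and L1ne: "L1 p q r s t \<noteq> 0"
  shows "\<exists>z a b c. proots (map_poly complex_of_real (quintic p q r s t)) = {#z, z, a, b, c#}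
            \<and> distinct [z, a, b, c]
            \<and> (L1 p q r s t > 0 \<longrightarrow> Im z = 0 \<and> Im a = 0 \<and> Im b = 0 \<and> Im c = 0)
            \<and> (L1 p q r s t < 0 \<longrightarrow> Im z = 0 \<and> Im a = 0 \<and> Im b \<noteq> 0 \<and> c = cnj b)"
proof -
  let ?F = "map_poly complex_of_real (quintic p q r s t)"
  have "length \<alpha> = degree ?F"
    by (metis roots size_mset size_proots_complex)
  then have "length \<alpha> = 5"
    by (simp add: quintic_def degree_map_poly)
  then obtain z a b c where M: "proots ?F = {#z, z, a, b, c#}"
    using mset_eq_double_if_not_distinct D0 roots root_disc_eq_0_iff by metis
  have distinct: "distinct [z, a, b, c]"
    using L1ne by (rule distinct_double_root_if_L1_ne_0[OF M])
  have "image_mset cnj (proots ?F) = proots ?F"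
    by (rule proots_real_poly_cnj) (simp add: coeff_map_poly)
  then have z: "cnj z = z" and abc: "cnj ` {a, b, c} = {a, b, c}"
    using cnj_fixes_double_root[OF distinct] unfolding M by blast+
  from distinct have "distinct [a, b, c]" by simp
  then show ?thesis using abc
  proof (cases rule: cnj_closed_three_cases)
    case 1
    then have "L1 p q r s t > 0"
      using L1_gt_0_if_real_roots[OF M L1ne z] by (simp add: complex_eq_iff)
    then show ?thesis using M distinct z 1 by (auto simp: complex_eq_iff)
  next
    case (2 x y)
    have M': "proots ?F = {#z, z, x, y, cnj y#}"
      using M 2(1) by simp
    have "L1 p q r s t < 0"
      using L1_lt_0_if_conjugate_pair[OF M' L1ne z] 2 by (simp add: complex_eq_iff)
    then show ?thesis
      using M' distinct_double_root_if_L1_ne_0[OF M' L1ne] z 2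
      by (intro exI[of _ z] exI[of _ x] exI[of _ y] exI[of _ "cnj y"]) (auto simp: complex_eq_iff)
  qed
qed

end
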